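(* Let $\mathcal T=(S,\Sigma,\kappa)$ be an STS and $B\in\Sigma$. Suppose $A\in\Sigma$ is an attractor, i.e., $\mathbb P^{\mathcal T}_\mu(\mathbf{GF}A)=1$ for every $\mu\in\mathrm{Dist}(S)$, and suppose there is $p>0$ such that for every $\nu\in\mathrm{Dist}(S)$ with $\nu(A\cap\overline{\widetilde B})=1$ we have $\mathbb P^{\mathcal T}_\nu(\mathbf F B)\ge p$. Then $\mathcal T$ is decisive with respect to $B$.
   Context: A stochastic transition system (STS) is a triple $\mathcal T=(S,\Sigma,\kappa)$ where $(S,\Sigma)$ is a measurable space and $\kappa:S\times\Sigma\to[0,1]$ is a Markov kernel. $\mathrm{Dist}(S)$: probability distributions on $(S,\Sigma)$; $\delta_s$: Dirac at $s$. $\mathbb P^{\mathcal T}_\mu$ is the probability measure on runs $S^\omega$ (with the $\sigma$-algebra generated by cylinders) induced by initial distribution $\mu$ and kernel $\kappa$. $\overline C=S\setminus C$; $\mathbf F B$: runs visiting $B$ at some step; $\mathbf{GF}A$: runs visiting $A$ infinitely often. $\widetilde B=\{s\in S:\mathbb P^{\mathcal T}_{\delta_s}(\mathbf F B)=0\}$ (assumed measurable). $\mathcal T$ is decisive w.r.t. $B$ if for every $\mu$, $\mathbb P^{\mathcal T}_\mu(\mathbf F B\vee\mathbf F\widetilde B)=1$. *)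

theory Defs
  imports "HOL-Probability.Probability"
begin

definition markov_kernel :: "'a measure \<Rightarrow> ('a \<Rightarrow> 'a measure) \<Rightarrow> bool" where
  "markov_kernel M K \<longleftrightarrow> K \<in> M \<rightarrow>\<^sub>M prob_algebra M"

definition dist_on :: "'a measure \<Rightarrow> 'a measure \<Rightarrow> bool" where
  "dist_on M \<mu> \<longleftrightarrow> sets \<mu> = sets M \<and> prob_space \<mu>"

fun cyl_weight :: "('a \<Rightarrow> 'a measure) \<Rightarrow> 'a set list \<Rightarrow> 'a \<Rightarrow> ennreal" where
  "cyl_weight K [] s = 1"
| "cyl_weight K (A # As) s = indicator A s * (\<integral>\<^sup>+ t. cyl_weight K As t \<partial>(K s))"

definition cylinder :: "'a measure \<Rightarrow> 'a set list \<Rightarrow> 'a stream set" where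
  "cylinder M As = {\<omega> \<in> space (stream_space M). \<forall>i < length As. \<omega> !! i \<in> As ! i}"

definition is_run_measure ::
  "'a measure \<Rightarrow> ('a \<Rightarrow> 'a measure) \<Rightarrow> 'a measure \<Rightarrow> 'a stream measure \<Rightarrow> bool" where
  "is_run_measure M K \<mu> P \<longleftrightarrow>
     sets P = sets (stream_space M) \<and> prob_space P \<and>
     (\<forall>As. set As \<subseteq> sets M \<longrightarrow>
        emeasure P (cylinder M As) = (\<integral>\<^sup>+ s. cyl_weight K As s \<partial>\<mu>))"

definition evF :: "'a measure \<Rightarrow> 'a set \<Rightarrow> 'a stream set" where
  "evF M B = {\<omega> \<in> space (stream_space M). \<exists>i. \<omega> !! i \<in> B}"

definition evGF :: "'a measure \<Rightarrow> 'a set \<Rightarrow> 'a stream set" where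
  "evGF M A = {\<omega> \<in> space (stream_space M). \<forall>n. \<exists>i\<ge>n. \<omega> !! i \<in> A}"

definition Btilde :: "'a measure \<Rightarrow> ('a measure \<Rightarrow> 'a stream measure) \<Rightarrow> 'a set \<Rightarrow> 'a set" where
  "Btilde M Pr B = {s \<in> space M. measure (Pr (return M s)) (evF M B) = 0}"

definition decisive :: "'a measure \<Rightarrow> ('a measure \<Rightarrow> 'a stream measure) \<Rightarrow> 'a set \<Rightarrow> bool" where
  "decisive M Pr B \<longleftrightarrow>
     (\<forall>\<mu>. dist_on M \<mu> \<longrightarrow> measure (Pr \<mu>) (evF M B \<union> evF M (Btilde M Pr B)) = 1)"

end

theory Submission
  imports Defs
begin

text \<open>Let u(s) be the probability of never visiting B \<union> Btilde from s, and c its supremum.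
  Runs avoiding B \<union> Btilde from a state of A not in Btilde avoid B with probability at most
  1 - p, and by the Markov property they can continue to avoid B \<union> Btilde afterwards with
  probability at most c; hence u \<le> c (1 - p) on A. Since A is visited almost surely, the same
  argument at the first visit to A gives u \<le> c (1 - p) everywhere, so c \<le> c (1 - p) and c = 0.
  The first visits are handled without stopping times: both estimates are instances of one
  inequality, proved by induction on a time horizon, for functions that are sub-harmonic inside
  a set D and bounded outside it.\<close>

lemma ennreal_eq_0_if_le_mult_one_minus:
  fixes c :: ennreal and p :: real
  assumes le: "c \<le> c * (1 - ennreal p)" and c: "c < \<top>" and p: "p > 0"
  shows "c = 0"
proof -
  obtain r where r: "c = ennreal r" "0 \<le> r"
    using c by (cases c) auto
  define q where "q = max 0 (1 - p)"
  have q: "0 \<le> q" "q < 1"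
    using p by (auto simp: q_def)
  have "1 - ennreal p = ennreal (1 - p)"
    using p by (simp add: ennreal_minus[symmetric])
  also have "\<dots> = ennreal q"
    by (simp add: q_def ennreal_neg max_def)
  finally have "r \<le> r * q"
    using le r q by (simp add: ennreal_mult[symmetric] ennreal_le_iff)
  then have "r = 0"
    using q r by (metis mult_left_le_one_le mult_le_cancel_left1 not_le order_antisym)
  then show ?thesis
    using r by simp
qed

definition evG :: "'a measure \<Rightarrow> 'a set \<Rightarrow> 'a stream set" where
  "evG M D = {\<omega> \<in> space (stream_space M). \<forall>i. \<omega> !! i \<in> D}"

lemma sets_evF[measurable]:
  assumes [measurable]: "B \<in> sets M" shows "evF M B \<in> sets (stream_space M)"
  unfolding evF_def by measurable

lemma sets_evG[measurable]:
  assumes [measurable]: "D \<in> sets M" shows "evG M D \<in> sets (stream_space M)"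
  unfolding evG_def by measurable

lemma evG_Diff_eq: "evG M (space M - B) = space (stream_space M) - evF M B"
  using snth_in[of _ "space M"] by (auto simp: evG_def evF_def space_stream_space)

lemma all_nat_unfold: "(\<forall>i. P i) \<longleftrightarrow> P 0 \<and> (\<forall>i. P (Suc i))"
  by (metis not0_implies_Suc)

lemma evG_eq_shd_stl:
  "evG M D = {\<omega> \<in> space (stream_space M). shd \<omega> \<in> D \<and> stl \<omega> \<in> evG M D}"
proof -
  have "(\<forall>i. \<omega> !! i \<in> D) \<longleftrightarrow> shd \<omega> \<in> D \<and> (\<forall>i. stl \<omega> !! i \<in> D)" for \<omega>
    using all_nat_unfold[of "\<lambda>i. \<omega> !! i \<in> D"] by simp
  then show ?thesis
    unfolding evG_def space_stream_space using streams_stl by blast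
qed

subsection \<open>Measures on the stream space are determined by cylinders\<close>

lemma cylinder_Cons:
  "cylinder M (A # As) = {\<omega> \<in> streams (space M). shd \<omega> \<in> A \<and> stl \<omega> \<in> cylinder M As}"
proof -
  have "\<And>\<omega>. (\<forall>i<length (A # As). \<omega> !! i \<in> (A # As) ! i)
     \<longleftrightarrow> shd \<omega> \<in> A \<and> (\<forall>i<length As. stl \<omega> !! i \<in> As ! i)"
    by (simp only: length_Cons All_less_Suc2 nth_Cons_0 nth_Cons_Suc snth.simps)
  then show ?thesis
    unfolding cylinder_def space_stream_space using streams_stl by blast
qed

lemma cylinder_eq_scylinder: "cylinder M As = scylinder (space M) As"
  by (induction As) (simp add: cylinder_def space_stream_space, simp add: cylinder_Cons)

lemma sets_cylinder[measurable]: "set As \<subseteq> sets M \<Longrightarrow> cylinder M As \<in> sets (stream_space M)"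
  unfolding cylinder_eq_scylinder by (intro sets_scylinder) auto

lemma Int_stable_scylinder: "Int_stable (scylinder (space M) ` lists (sets M))"
proof (rule Int_stableI_image)
  fix xs ys assume "xs \<in> lists (sets M)" "ys \<in> lists (sets M)"
  then show "\<exists>zs\<in>lists (sets M). scylinder (space M) xs \<inter> scylinder (space M) ys = scylinder (space M) zs"
  proof (induction xs arbitrary: ys)
    case Nil
    then show ?case
      by (auto simp add: Int_absorb1 scylinder_streams)
  next
    case xs: (Cons x xs)
    show ?case
    proof (cases ys)
      case Nil
      with xs.hyps show ?thesis
        by (auto simp add: Int_absorb2 scylinder_streams intro!: bexI[of _ "x # xs"])
    next
      case ys: (Cons y ys')
      with xs.IH[of ys'] xs.prems obtain zs where zs: "zs \<in> lists (sets M)"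
        and eq: "scylinder (space M) xs \<inter> scylinder (space M) ys' = scylinder (space M) zs"
        by auto
      show ?thesis
      proof (intro bexI[of _ "(x \<inter> y) # zs"])
        show "x \<inter> y # zs \<in> lists (sets M)"
          using zs xs ys by (auto intro: sets.Int)
        show "scylinder (space M) (x # xs) \<inter> scylinder (space M) ys = scylinder (space M) (x \<inter> y # zs)"
          by (auto simp add: eq[symmetric] ys)
      qed
    qed
  qed
qed

lemma scylinder_replicate_snoc:
  "A \<in> sets M \<Longrightarrow>
    scylinder (space M) (replicate i (space M) @ [A]) = (\<lambda>\<omega>. \<omega> !! i) -` A \<inter> streams (space M)"
  by (induction i) (auto simp add: streams_shd streams_stl cong: conj_cong)

lemma sets_stream_space_eq_sigma_scylinder:
  "sets (stream_space M) = sigma_sets (streams (space M)) (scylinder (space M) ` lists (sets M))"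
proof -
  let ?G = "scylinder (space M) ` lists (sets M)"
  let ?N = "sigma (streams (space M)) ?G"
  have G: "?G \<subseteq> Pow (streams (space M))"
    using scylinder_streams by auto
  have "sets (stream_space M) \<subseteq> sets ?N"
  proof (rule sets_stream_space_in_sets)
    show "space ?N = streams (space M)"
      using G by simp
    fix i show "(\<lambda>\<omega>. \<omega> !! i) \<in> ?N \<rightarrow>\<^sub>M M"
    proof (rule measurableI)
      fix \<omega> assume "\<omega> \<in> space ?N"
      then show "\<omega> !! i \<in> space M"
        using G by (simp add: snth_in)
    next
      fix A assume A: "A \<in> sets M"
      have "(\<lambda>\<omega>. \<omega> !! i) -` A \<inter> space ?N = scylinder (space M) (replicate i (space M) @ [A])"
        using G A by (simp add: scylinder_replicate_snoc)
      also have "\<dots> \<in> sets ?N"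
        using A G by (intro in_measure_of) auto
      finally show "(\<lambda>\<omega>. \<omega> !! i) -` A \<inter> space ?N \<in> sets ?N" .
    qed
  qed
  moreover have "sets ?N \<subseteq> sets (stream_space M)"
    using G by (subst sigma_le_sets) (auto intro!: sets_scylinder simp: space_stream_space)
  ultimately show ?thesis
    using G by simp
qed

lemma stream_space_measure_eqI:
  assumes "prob_space P1" "prob_space P2"
    and "sets P1 = sets (stream_space M)" "sets P2 = sets (stream_space M)"
    and eq: "\<And>As. set As \<subseteq> sets M \<Longrightarrow> emeasure P1 (cylinder M As) = emeasure P2 (cylinder M As)"
  shows "P1 = P2"
proof (rule stream_space_eq_scylinder[where G="sets M" and C="{space M}" and S=M])
  fix xs assume "xs \<in> lists (sets M)"
  then show "emeasure P1 (scylinder (space M) xs) = emeasure P2 (scylinder (space M) xs)"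
    using eq[of xs] by (auto simp: cylinder_eq_scylinder)
qed (use assms in \<open>auto intro: sets.Int_stable dest: sets.sets_into_space\<close>)

subsection \<open>The run measures of a stochastic transition system\<close>

locale sts =
  fixes M :: "'a measure" and K :: "'a \<Rightarrow> 'a measure"
    and Pr :: "'a measure \<Rightarrow> 'a stream measure"
  assumes kernel: "markov_kernel M K"
    and runs: "\<And>\<mu>. dist_on M \<mu> \<Longrightarrow> is_run_measure M K \<mu> (Pr \<mu>)"
begin

definition run_from :: "'a \<Rightarrow> 'a stream measure" where
  "run_from s = Pr (return M s)"

lemma kernel_measurable: "K \<in> M \<rightarrow>\<^sub>M prob_algebra M"
  using kernel by (simp add: markov_kernel_def)

lemma dist_on_kernel: "s \<in> space M \<Longrightarrow> dist_on M (K s)"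
  using measurable_space[OF kernel_measurable] by (simp add: dist_on_def space_prob_algebra)

lemma dist_on_return: "s \<in> space M \<Longrightarrow> dist_on M (return M s)"
  by (simp add: dist_on_def prob_space_return)

lemma dist_on_in_prob_algebra: "dist_on M \<mu> \<Longrightarrow> \<mu> \<in> space (prob_algebra M)"
  by (simp add: dist_on_def space_prob_algebra)

lemma space_dist_on: "dist_on M \<mu> \<Longrightarrow> space \<mu> = space M"
  unfolding dist_on_def by (metis sets_eq_imp_space_eq)

lemma prob_space_kernel: "s \<in> space M \<Longrightarrow> prob_space (K s)"
  using dist_on_kernel by (simp add: dist_on_def)

lemma space_kernel: "s \<in> space M \<Longrightarrow> space (K s) = space M"
  using space_dist_on[OF dist_on_kernel] .

lemma measurable_kernel: "s \<in> space M \<Longrightarrow> f \<in> borel_measurable M \<Longrightarrow> f \<in> borel_measurable (K s)"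
  using dist_on_kernel by (simp add: dist_on_def cong: measurable_cong_sets)

lemma prob_space_Pr: "dist_on M \<mu> \<Longrightarrow> prob_space (Pr \<mu>)"
  using runs by (simp add: is_run_measure_def)

lemma sets_Pr: "dist_on M \<mu> \<Longrightarrow> sets (Pr \<mu>) = sets (stream_space M)"
  using runs by (simp add: is_run_measure_def)

lemma space_Pr: "dist_on M \<mu> \<Longrightarrow> space (Pr \<mu>) = streams (space M)"
  using sets_Pr[THEN sets_eq_imp_space_eq] by (simp add: space_stream_space)

lemma emeasure_Pr_cylinder:
  "dist_on M \<mu> \<Longrightarrow> set As \<subseteq> sets M \<Longrightarrow>
    emeasure (Pr \<mu>) (cylinder M As) = (\<integral>\<^sup>+ s. cyl_weight K As s \<partial>\<mu>)"
  using runs by (simp add: is_run_measure_def)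

lemma prob_space_run_from: "s \<in> space M \<Longrightarrow> prob_space (run_from s)"
  unfolding run_from_def by (rule prob_space_Pr[OF dist_on_return])

lemma sets_run_from: "s \<in> space M \<Longrightarrow> sets (run_from s) = sets (stream_space M)"
  unfolding run_from_def by (rule sets_Pr[OF dist_on_return])

lemma space_run_from: "s \<in> space M \<Longrightarrow> space (run_from s) = space (stream_space M)"
  using sets_eq_imp_space_eq[OF sets_run_from] .

lemma emeasure_run_from_eq_measure:
  assumes s: "s \<in> space M"
  shows "emeasure (run_from s) X = ennreal (measure (Pr (return M s)) X)"
proof -
  interpret prob_space "Pr (return M s)"
    by (rule prob_space_Pr[OF dist_on_return[OF s]])
  show ?thesis
    by (simp add: run_from_def emeasure_eq_measure)
qed

lemma cyl_weight_measurable: "set As \<subseteq> sets M \<Longrightarrow> cyl_weight K As \<in> borel_measurable M"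
proof (induction As)
  case Nil
  then show ?case by simp
next
  case (Cons A As)
  have [measurable]: "A \<in> sets M"
    using Cons.prems by simp
  have [measurable]: "(\<lambda>s. \<integral>\<^sup>+ t. cyl_weight K As t \<partial>K s) \<in> borel_measurable M"
    using Cons kernel_measurable[THEN measurable_prob_algebraD]
    by (intro measurable_compose[OF _ nn_integral_measurable_subprob_algebra]) auto
  show ?case
    unfolding cyl_weight.simps by measurable
qed

lemma emeasure_run_from_cylinder:
  "s \<in> space M \<Longrightarrow> set As \<subseteq> sets M \<Longrightarrow> emeasure (run_from s) (cylinder M As) = cyl_weight K As s"
  unfolding run_from_def
  by (simp add: emeasure_Pr_cylinder dist_on_return nn_integral_return cyl_weight_measurable)

lemma run_from_measurable: "run_from \<in> M \<rightarrow>\<^sub>M prob_algebra (stream_space M)"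
proof (rule measurable_prob_algebra_generated
    [OF sets_stream_space_eq_sigma_scylinder Int_stable_scylinder])
  show "scylinder (space M) ` lists (sets M) \<subseteq> Pow (streams (space M))"
    using scylinder_streams by auto
next
  fix X assume "X \<in> scylinder (space M) ` lists (sets M)"
  then obtain As where As: "set As \<subseteq> sets M" "X = cylinder M As"
    by (auto simp: cylinder_eq_scylinder)
  then have "(\<lambda>s. emeasure (run_from s) X) \<in> borel_measurable M \<longleftrightarrow> cyl_weight K As \<in> borel_measurable M"
    by (intro measurable_cong) (simp add: emeasure_run_from_cylinder)
  then show "(\<lambda>s. emeasure (run_from s) X) \<in> borel_measurable M"
    using cyl_weight_measurable As by simp
qed (simp_all add: prob_space_run_from sets_run_from)

lemma measurable_emeasure_run_from[measurable]:
  "X \<in> sets (stream_space M) \<Longrightarrow> (\<lambda>s. emeasure (run_from s) X) \<in> borel_measurable M"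
  using measurable_compose[OF run_from_measurable[THEN measurable_prob_algebraD]
      measurable_emeasure_subprob_algebra] .

lemma Pr_eq_bind_run_from:
  assumes \<mu>: "dist_on M \<mu>"
  shows "Pr \<mu> = \<mu> \<bind> run_from"
proof (rule stream_space_measure_eqI[where M=M])
  note \<mu>' = dist_on_in_prob_algebra[OF \<mu>]
  show "prob_space (\<mu> \<bind> run_from)"
    using prob_space_bind'[OF \<mu>' run_from_measurable] .
  show "sets (\<mu> \<bind> run_from) = sets (stream_space M)"
    using sets_bind'[OF \<mu>' run_from_measurable] .
  fix As assume As: "set As \<subseteq> sets M"
  have "emeasure (\<mu> \<bind> run_from) (cylinder M As) = (\<integral>\<^sup>+s. emeasure (run_from s) (cylinder M As) \<partial>\<mu>)"
    using As by (intro emeasure_bind_prob_algebra[OF \<mu>' run_from_measurable]) measurable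
  also have "\<dots> = (\<integral>\<^sup>+s. cyl_weight K As s \<partial>\<mu>)"
    using As by (intro nn_integral_cong) (simp add: space_dist_on[OF \<mu>] emeasure_run_from_cylinder)
  finally show "emeasure (Pr \<mu>) (cylinder M As) = emeasure (\<mu> \<bind> run_from) (cylinder M As)"
    using emeasure_Pr_cylinder[OF \<mu> As] by simp
qed (use \<mu> in \<open>simp_all add: prob_space_Pr sets_Pr\<close>)

lemma emeasure_Pr:
  "dist_on M \<mu> \<Longrightarrow> X \<in> sets (stream_space M) \<Longrightarrow>
    emeasure (Pr \<mu>) X = (\<integral>\<^sup>+s. emeasure (run_from s) X \<partial>\<mu>)"
  unfolding Pr_eq_bind_run_from
  by (rule emeasure_bind_prob_algebra[OF dist_on_in_prob_algebra run_from_measurable])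

lemma run_from_eq_distr_Pr_kernel:
  assumes s: "s \<in> space M"
  shows "run_from s = distr (Pr (K s)) (stream_space M) (\<lambda>\<omega>. s ## \<omega>)"
proof (rule stream_space_measure_eqI[where M=M])
  note Ks = dist_on_kernel[OF s]
  interpret PK: prob_space "Pr (K s)"
    by (rule prob_space_Pr[OF Ks])
  have meas: "(\<lambda>\<omega>. s ## \<omega>) \<in> Pr (K s) \<rightarrow>\<^sub>M stream_space M"
    using s by (subst measurable_cong_sets[OF sets_Pr[OF Ks] refl]) measurable
  show "prob_space (distr (Pr (K s)) (stream_space M) (\<lambda>\<omega>. s ## \<omega>))"
    by (rule PK.prob_space_distr[OF meas])
  fix As assume As: "set As \<subseteq> sets M"
  have "emeasure (distr (Pr (K s)) (stream_space M) (\<lambda>\<omega>. s ## \<omega>)) (cylinder M As)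
      = cyl_weight K As s"
  proof (cases As)
    case Nil
    then have "(\<lambda>\<omega>. s ## \<omega>) -` cylinder M As \<inter> space (Pr (K s)) = space (Pr (K s))"
      using s by (auto simp: cylinder_eq_scylinder space_Pr[OF Ks])
    then show ?thesis
      using As by (simp add: emeasure_distr[OF meas] Nil PK.emeasure_space_1)
  next
    case (Cons A As')
    then have "(\<lambda>\<omega>. s ## \<omega>) -` cylinder M As \<inter> space (Pr (K s)) = (if s \<in> A then cylinder M As' else {})"
      using s scylinder_streams[of "space M" As']
      by (auto simp: cylinder_eq_scylinder space_Pr[OF Ks])
    then show ?thesis
      using As Cons emeasure_Pr_cylinder[OF Ks, of As']
      by (simp add: emeasure_distr[OF meas] indicator_def)
  qed
  then show "emeasure (run_from s) (cylinder M As)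
      = emeasure (distr (Pr (K s)) (stream_space M) (\<lambda>\<omega>. s ## \<omega>)) (cylinder M As)"
    using emeasure_run_from_cylinder[OF s As] by simp
qed (use s in \<open>simp_all add: prob_space_run_from sets_run_from\<close>)

lemma emeasure_run_from_shd_stl:
  assumes s: "s \<in> space M" and D: "D \<in> sets M" and Y: "Y \<in> sets (stream_space M)"
  shows "emeasure (run_from s) {\<omega>\<in>space (stream_space M). shd \<omega> \<in> D \<and> stl \<omega> \<in> Y}
       = indicator D s * (\<integral>\<^sup>+t. emeasure (run_from t) Y \<partial>K s)"
proof -
  note Ks = dist_on_kernel[OF s]
  have meas: "(\<lambda>\<omega>. s ## \<omega>) \<in> Pr (K s) \<rightarrow>\<^sub>M stream_space M"
    using s by (subst measurable_cong_sets[OF sets_Pr[OF Ks] refl]) measurable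
  have "(\<lambda>\<omega>. s ## \<omega>) -` {\<omega>\<in>space (stream_space M). shd \<omega> \<in> D \<and> stl \<omega> \<in> Y} \<inter> space (Pr (K s))
      = (if s \<in> D then Y else {})"
    using s sets.sets_into_space[OF Y] by (auto simp: space_Pr[OF Ks] space_stream_space)
  then have "emeasure (run_from s) {\<omega>\<in>space (stream_space M). shd \<omega> \<in> D \<and> stl \<omega> \<in> Y}
      = indicator D s * emeasure (Pr (K s)) Y"
    unfolding run_from_eq_distr_Pr_kernel[OF s] using D Y
    by (simp add: emeasure_distr[OF meas] indicator_def)
  then show ?thesis
    using emeasure_Pr[OF Ks Y] by simp
qed

lemma emeasure_run_from_evG_Diff:
  assumes s: "s \<in> space M" and B: "B \<in> sets M"
  shows "emeasure (run_from s) (evG M (space M - B)) = 1 - emeasure (run_from s) (evF M B)"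
proof -
  interpret Q: prob_space "run_from s"
    by (rule prob_space_run_from[OF s])
  have "evG M (space M - B) = space (run_from s) - evF M B"
    using evG_Diff_eq space_run_from[OF s] by simp
  moreover have "evF M B \<in> sets (run_from s)"
    using B by (simp add: sets_run_from[OF s])
  ultimately show ?thesis
    by (simp add: emeasure_compl Q.emeasure_space_1)
qed

subsection \<open>Runs avoiding a set\<close>

lemma le_plus_emeasure_run_from_evG:
  fixes f :: "'a \<Rightarrow> ennreal" and b c :: ennreal
  assumes D[measurable]: "D \<in> sets M" and f[measurable]: "f \<in> borel_measurable M"
    and c: "c < \<top>" and f_le_c: "\<And>t. t \<in> space M \<Longrightarrow> f t \<le> c"
    and f_inside: "\<And>t. t \<in> space M \<Longrightarrow> t \<in> D \<Longrightarrow> f t \<le> (\<integral>\<^sup>+t'. f t' \<partial>K t)"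
    and f_outside: "\<And>t. t \<in> space M \<Longrightarrow> t \<notin> D \<Longrightarrow> f t \<le> b"
    and s: "s \<in> space M"
  shows "f s \<le> b + c * emeasure (run_from s) (evG M D)"
proof -
  define stay where "stay n = {\<omega>\<in>space (stream_space M). \<forall>i<n. \<omega> !! i \<in> D}" for n
  have stay[measurable]: "stay n \<in> sets (stream_space M)" for n
    unfolding stay_def by measurable
  have stay_Suc: "stay (Suc n) = {\<omega>\<in>space (stream_space M). shd \<omega> \<in> D \<and> stl \<omega> \<in> stay n}" for n
    unfolding stay_def All_less_Suc2 by (auto simp: space_stream_space streams_stl)
  define w where "w n t = emeasure (run_from t) (stay n)" for n t
  have bound: "f t \<le> b + c * w n t" if t: "t \<in> space M" for n t
    using t
  proof (induction n arbitrary: t)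
    case 0
    then have "w 0 t = 1"
      using prob_space.emeasure_space_1[OF prob_space_run_from] space_run_from
      by (simp add: w_def stay_def)
    then show ?case
      using f_le_c[OF 0] by (simp add: add_increasing)
  next
    case (Suc n t)
    interpret Kt: prob_space "K t"
      by (rule prob_space_kernel[OF Suc.prems])
    show ?case
    proof (cases "t \<in> D")
      case True
      have "f t \<le> (\<integral>\<^sup>+t'. f t' \<partial>K t)"
        using f_inside[OF Suc.prems True] .
      also have "\<dots> \<le> (\<integral>\<^sup>+t'. b + c * w n t' \<partial>K t)"
        using Suc.IH by (intro nn_integral_mono) (simp add: space_kernel[OF Suc.prems])
      also have "\<dots> = b + c * (\<integral>\<^sup>+t'. w n t' \<partial>K t)"
      proof -
        have "w n \<in> borel_measurable (K t)"
          unfolding w_def by (intro measurable_kernel[OF Suc.prems]) measurable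
        then show ?thesis
          by (simp add: nn_integral_add nn_integral_cmult Kt.emeasure_space_1)
      qed
      also have "(\<integral>\<^sup>+t'. w n t' \<partial>K t) = w (Suc n) t"
        using emeasure_run_from_shd_stl[OF Suc.prems D stay, of n] True
        by (simp add: w_def stay_Suc)
      finally show ?thesis .
    next
      case False
      then show ?thesis
        using f_outside[OF Suc.prems] by (simp add: add_increasing2)
    qed
  qed
  interpret Qs: prob_space "run_from s"
    by (rule prob_space_run_from[OF s])
  have "decseq stay"
    unfolding decseq_def stay_def by auto
  then have "(\<lambda>n. w n s) \<longlonglongrightarrow> emeasure (run_from s) (\<Inter>n. stay n)"
    unfolding w_def by (intro Lim_emeasure_decseq) (auto simp: sets_run_from[OF s])
  moreover have "(\<Inter>n. stay n) = evG M D"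
    unfolding stay_def evG_def by auto
  ultimately have "(\<lambda>n. w n s) \<longlonglongrightarrow> emeasure (run_from s) (evG M D)"
    by simp
  then have "(\<lambda>n. b + c * w n s) \<longlonglongrightarrow> b + c * emeasure (run_from s) (evG M D)"
    by (intro tendsto_add tendsto_const ennreal_tendsto_cmult c)
  then show ?thesis
    using bound[OF s] by (intro LIMSEQ_le_const) auto
qed

lemma emeasure_run_from_evG_eq_0:
  fixes p :: real
  assumes B[measurable]: "B \<in> sets M" and N[measurable]: "N \<in> sets M" and "B \<subseteq> N"
    and A[measurable]: "A \<in> sets M" and p: "p > 0"
    and attractor: "\<And>t. t \<in> space M \<Longrightarrow> emeasure (run_from t) (evGF M A) = 1"
    and reach: "\<And>t. t \<in> space M \<Longrightarrow> t \<in> A \<Longrightarrow> t \<notin> N \<Longrightarrow> ennreal p \<le> emeasure (run_from t) (evF M B)"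
    and s: "s \<in> space M"
  shows "emeasure (run_from s) (evG M (space M - N)) = 0"
proof -
  define u where "u t = emeasure (run_from t) (evG M (space M - N))" for t
  have u_meas[measurable]: "u \<in> borel_measurable M"
    unfolding u_def by measurable
  have u_step: "u t = indicator (space M - N) t * (\<integral>\<^sup>+t'. u t' \<partial>K t)" if t: "t \<in> space M" for t
    unfolding u_def
    by (subst evG_eq_shd_stl) (rule emeasure_run_from_shd_stl[OF t]; measurable)
  have u_N: "u t = 0" if "t \<in> space M" "t \<in> N" for t
    using u_step that by simp
  have u_inside: "u t \<le> (\<integral>\<^sup>+t'. u t' \<partial>K t)" if t: "t \<in> space M" for t
    using u_step[OF t] by (simp add: indicator_def)
  define c where "c = (SUP t\<in>space M. u t)"
  have u_le_c: "u t \<le> c" if "t \<in> space M" for t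
    unfolding c_def using that by (rule SUP_upper)
  have "c \<le> 1"
    unfolding c_def u_def
    by (intro SUP_least prob_space.emeasure_le_1 prob_space_run_from)
  then have c_finite: "c < \<top>"
    using ennreal_one_less_top by (rule le_less_trans)
  define q where "q = 1 - ennreal p"
  have u_A: "u t \<le> c * q" if t: "t \<in> space M" and "t \<in> A" for t
  proof (cases "t \<in> N")
    case True
    then show ?thesis
      using u_N[OF t] by simp
  next
    case False
    have "u t \<le> 0 + c * emeasure (run_from t) (evG M (space M - B))"
      using u_N \<open>B \<subseteq> N\<close>
      by (intro le_plus_emeasure_run_from_evG[OF _ u_meas c_finite u_le_c u_inside _ t]) auto
    also have "emeasure (run_from t) (evG M (space M - B)) \<le> q"
      unfolding q_def emeasure_run_from_evG_Diff[OF t B]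
      using reach[OF t \<open>t \<in> A\<close> False] by (rule ennreal_minus_mono[OF order_refl])
    finally show ?thesis
      by (simp add: mult_left_mono)
  qed
  have "emeasure (run_from t) (evF M A) = 1" if t: "t \<in> space M" for t
  proof (rule antisym)
    show "emeasure (run_from t) (evF M A) \<le> 1"
      by (rule prob_space.emeasure_le_1[OF prob_space_run_from[OF t]])
    have "evGF M A \<subseteq> evF M A"
      unfolding evGF_def evF_def by blast
    then show "1 \<le> emeasure (run_from t) (evF M A)"
      using attractor[OF t] by (metis emeasure_mono sets_evF[OF A] sets_run_from[OF t])
  qed
  then have u_le: "u t \<le> c * q" if t: "t \<in> space M" for t
    using le_plus_emeasure_run_from_evG[of "space M - A" u c "c * q", OF _ u_meas c_finite u_le_c
        u_inside _ t] u_A t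
    by (simp add: emeasure_run_from_evG_Diff)
  have "c \<le> c * q"
    unfolding c_def by (intro SUP_least u_le[unfolded c_def])
  then have "c = 0"
    unfolding q_def using c_finite p by (rule ennreal_eq_0_if_le_mult_one_minus)
  then show ?thesis
    using u_le_c[OF s] by (simp add: u_def)
qed

lemma measure_Pr_evF_Un_eq_1:
  assumes B: "B \<in> sets M" and C: "C \<in> sets M"
    and avoid_null: "\<And>s. s \<in> space M \<Longrightarrow> emeasure (run_from s) (evG M (space M - (B \<union> C))) = 0"
    and \<mu>: "dist_on M \<mu>"
  shows "measure (Pr \<mu>) (evF M B \<union> evF M C) = 1"
proof -
  interpret P: prob_space "Pr \<mu>"
    by (rule prob_space_Pr[OF \<mu>])
  have "(\<integral>\<^sup>+s. emeasure (run_from s) (evG M (space M - (B \<union> C))) \<partial>\<mu>) = (\<integral>\<^sup>+s. 0 \<partial>\<mu>)"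
    by (intro nn_integral_cong) (simp add: avoid_null space_dist_on[OF \<mu>])
  then have "emeasure (Pr \<mu>) (evG M (space M - (B \<union> C))) = 0"
    using B C by (simp add: emeasure_Pr[OF \<mu>])
  moreover have "evF M B \<union> evF M C = space (Pr \<mu>) - evG M (space M - (B \<union> C))"
    unfolding evG_Diff_eq space_Pr[OF \<mu>] by (auto simp: evF_def space_stream_space)
  moreover have "evG M (space M - (B \<union> C)) \<in> P.events"
    using B C by (simp add: sets_Pr[OF \<mu>])
  ultimately show ?thesis
    by (simp add: P.prob_compl P.emeasure_eq_measure)
qed

end

theorem mainTheorem4:
  fixes M :: "'a measure" and K :: "'a \<Rightarrow> 'a measure"
    and Pr :: "'a measure \<Rightarrow> 'a stream measure"
    and A B :: "'a set" and p :: real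
  assumes kernel: "markov_kernel M K"
    and runs: "\<And>\<mu>. dist_on M \<mu> \<Longrightarrow> is_run_measure M K \<mu> (Pr \<mu>)"
    and B: "B \<in> sets M"
    and Bt: "Btilde M Pr B \<in> sets M"
    and A: "A \<in> sets M"
    and attractor: "\<And>\<mu>. dist_on M \<mu> \<Longrightarrow> measure (Pr \<mu>) (evGF M A) = 1"
    and p: "p > 0"
    and reach: "\<And>\<nu>. dist_on M \<nu> \<Longrightarrow> measure \<nu> (A \<inter> (space M - Btilde M Pr B)) = 1
                   \<Longrightarrow> measure (Pr \<nu>) (evF M B) \<ge> p"
  shows "decisive M Pr B"
proof -
  interpret sts M K Pr
    using kernel runs by unfold_locales
  let ?N = "B \<union> Btilde M Pr B"
  have avoid_null: "emeasure (run_from s) (evG M (space M - ?N)) = 0" if s: "s \<in> space M" for s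
  proof (rule emeasure_run_from_evG_eq_0[OF B _ _ A p _ _ s])
    fix t assume t: "t \<in> space M"
    show "emeasure (run_from t) (evGF M A) = 1"
      using attractor[OF dist_on_return[OF t]] by (simp add: emeasure_run_from_eq_measure[OF t])
    assume "t \<in> A" "t \<notin> ?N"
    then have "measure (return M t) (A \<inter> (space M - Btilde M Pr B)) = 1"
      using A Bt t by (simp add: measure_return)
    then show "ennreal p \<le> emeasure (run_from t) (evF M B)"
      using reach[OF dist_on_return[OF t]] by (simp add: emeasure_run_from_eq_measure[OF t])
  qed (use B Bt in auto)
  show ?thesis
    unfolding decisive_def using B Bt avoid_null by (blast intro: measure_Pr_evF_Un_eq_1)
qed

end
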